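(* Let $G=\langle A\cup B\rangle$ be a CS group and let $g\in G$. Then: (1) $\mathrm{syl}(g|_x)\le \tfrac12(\mathrm{syl}(g)+1)$ for all $x\in X$; (2) $\sum_{x\in X}\mathrm{syl}(g|_x)\le \mathrm{syl}(g)$; (3) $\mathrm{syl}(g\|_x)\le\mathrm{syl}(g)$ for all $x\in X$ with $\ell_g(x)<\infty$; (4) if the permutation $g|^\epsilon$ has finite order, then $g\|_x\in A$ for all but finitely many $x\in X$.
   Context: Let $X$ be a nonempty set (possibly infinite) with a distinguished letter $0\in X$, and $\dot X=X\setminus\{0\}$. $X^*$ is the free monoid on $X$ (concatenation $u\star v$, empty word $\epsilon$), viewed as a regular rooted tree; $X^n$ is the $n$-th layer. $\mathrm{Aut}(X^* )$ is the group of root-fixing tree automorphisms, acting on the right ($v\mapsto v.g$; $gh$ = first $g$ then $h$); conjugation is ${}^hg=hgh^{-1}$. The section $g|_u$ is defined by $(u\star v).g=u.g\star v.(g|_u)$ for all $v$; $g|^\epsilon\in\mathrm{Sym}(X)$ is the permutation induced by $g$ on $X^1=X$. Elements $\rho\in\mathrm{Sym}(X)$ are identified with rooted automorphisms $(x\star v).\rho=x.\rho\star v$. $\mathrm{St}(1)$ is the stabiliser of all vertices of $X^1$. For a vertex $v$, $\ell_g(v)$ is the length of the $\langle g\rangle$-orbit of $v$; if finite, $g\|_v:=g^{\ell_g(v)}|_v$ (stabilised section). A constant spinal (CS) group is $G=\langle A\cup B\rangle\le\mathrm{Aut}(X^* )$, where $A\le\mathrm{Sym}(X)$ is a transitive permutation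 group (the rooted group, embedded as rooted automorphisms) and $B\le\mathrm{St}(1)$ is a subgroup (the directed group) such that $b|_0=b$ for all $b\in B$ and the elements $b|_x$ ($b\in B$, $x\in\dot X$) lie in $A$ and generate $A$. Every $g\in G$ can be written $g=({}^{a_0}b_0)({}^{a_1}b_1)\cdots({}^{a_{n-1}}b_{n-1})a_n$ with $a_i\in A$, $b_i\in B$, $n\in\mathbb N$; the syllable length $\mathrm{syl}(g)$ is the least such $n$. *)

theory Defs
  imports "HOL-Algebra.Algebra"
begin

text \<open>Vertices of the tree X^* are lists over the type 'a (X = UNIV).
  Automorphisms act on the right: v.g is written g v; the product gh
  (first g, then h) is the function composition h o g.\<close>

definition tree_aut :: "('a list \<Rightarrow> 'a list) set" where
  "tree_aut = {f. bij f \<and> (\<forall>u. length (f u) = length u)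
                 \<and> (\<forall>u v. take (length u) (f (u @ v)) = f u)}"

definition Aut_grp :: "('a list \<Rightarrow> 'a list) monoid" where
  "Aut_grp = \<lparr>carrier = tree_aut, monoid.mult = (\<lambda>g h. h \<circ> g), one = id\<rparr>"

definition Sym_grp :: "('a \<Rightarrow> 'a) monoid" where
  "Sym_grp = \<lparr>carrier = {p. bij p}, monoid.mult = (\<lambda>p q. q \<circ> p), one = id\<rparr>"

fun rooted :: "('a \<Rightarrow> 'a) \<Rightarrow> 'a list \<Rightarrow> 'a list" where
  "rooted \<rho> [] = []"
| "rooted \<rho> (x # v) = \<rho> x # v"

text \<open>section g|_u : (u @ v).g = u.g @ v.(g|_u)\<close>
definition sec :: "('a list \<Rightarrow> 'a list) \<Rightarrow> 'a list \<Rightarrow> 'a list \<Rightarrow> 'a list" where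
  "sec g u = (\<lambda>v. drop (length u) (g (u @ v)))"

definition top_perm :: "('a list \<Rightarrow> 'a list) \<Rightarrow> 'a \<Rightarrow> 'a" where
  "top_perm g = (\<lambda>x. hd (g [x]))"

definition St1 :: "('a list \<Rightarrow> 'a list) set" where
  "St1 = {g \<in> tree_aut. \<forall>x. g [x] = [x]}"

text \<open>orbit of v under <g>; for a bijection the forward orbit is finite
  iff the full orbit is finite, and then they coincide\<close>
definition orb :: "('a list \<Rightarrow> 'a list) \<Rightarrow> 'a list \<Rightarrow> 'a list set" where
  "orb g v = {(g ^^ n) v | n. True}"

definition orb_len :: "('a list \<Rightarrow> 'a list) \<Rightarrow> 'a list \<Rightarrow> nat" where
  "orb_len g v = card (orb g v)"

definition stab_sec :: "('a list \<Rightarrow> 'a list) \<Rightarrow> 'a list \<Rightarrow> 'a list \<Rightarrow> 'a list" where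
  "stab_sec g v = sec (g ^^ orb_len g v) v"

definition CS_group :: "'a \<Rightarrow> ('a \<Rightarrow> 'a) set \<Rightarrow> ('a list \<Rightarrow> 'a list) set \<Rightarrow> bool" where
  "CS_group z A B \<longleftrightarrow>
     subgroup A Sym_grp \<and> (\<forall>x y. \<exists>a\<in>A. a x = y)
   \<and> subgroup B Aut_grp \<and> B \<subseteq> St1
   \<and> (\<forall>b\<in>B. sec b [z] = b)
   \<and> (\<forall>b\<in>B. \<forall>x. x \<noteq> z \<longrightarrow> sec b [x] \<in> rooted ` A)
   \<and> generate Sym_grp {a. \<exists>b\<in>B. \<exists>x. x \<noteq> z \<and> sec b [x] = rooted a} = A"

definition CS_gen :: "('a \<Rightarrow> 'a) set \<Rightarrow> ('a list \<Rightarrow> 'a list) set \<Rightarrow> ('a list \<Rightarrow> 'a list) set" where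
  "CS_gen A B = generate Aut_grp (rooted ` A \<union> B)"

definition tconj :: "('a list \<Rightarrow> 'a list) \<Rightarrow> ('a list \<Rightarrow> 'a list) \<Rightarrow> 'a list \<Rightarrow> 'a list" where
  "tconj h g = h \<otimes>\<^bsub>Aut_grp\<^esub> g \<otimes>\<^bsub>Aut_grp\<^esub> inv\<^bsub>Aut_grp\<^esub> h"

text \<open>the product (^{a_0} b_0)(^{a_1} b_1)...(^{a_{n-1}} b_{n-1}) a_n\<close>
fun syl_prod :: "(('a \<Rightarrow> 'a) \<times> ('a list \<Rightarrow> 'a list)) list \<Rightarrow> ('a \<Rightarrow> 'a) \<Rightarrow> 'a list \<Rightarrow> 'a list" where
  "syl_prod [] a = rooted a"
| "syl_prod ((a', b) # ps) a = tconj (rooted a') b \<otimes>\<^bsub>Aut_grp\<^esub> syl_prod ps a"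

definition syl :: "('a \<Rightarrow> 'a) set \<Rightarrow> ('a list \<Rightarrow> 'a list) set \<Rightarrow> ('a list \<Rightarrow> 'a list) \<Rightarrow> nat" where
  "syl A B g = (LEAST n. \<exists>ps a. length ps = n \<and> set ps \<subseteq> A \<times> B \<and> a \<in> A
                              \<and> g = syl_prod ps a)"

end

theory Submission
  imports Defs
begin

text \<open>Write g in normal form as a product of n = syl(g) syllables \<open>^{a_i} b_i\<close>
  followed by a rooted a_n. The section at x of a syllable \<open>^{a} b\<close> is the section of b
  at the image of x under a: this is b itself when that image is the distinguished letter z,
  and a rooted element of A otherwise. Hence g|_x is a word of n letters, and merging each
  maximal run of consecutive B-letters yields a normal form of g|_x with one syllable per run:
  at most (n+1)/2 of them, and at most the number of indices i at which a_i sends x to z.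
  As each a_i is a bijection, an index is hit by at most one x; summing over x gives (2), and
  summing along an orbit of g gives (3). If a_n, the permutation g induces on the first layer,
  has finite order, every x whose stabilised section is not rooted lies in the a_n-orbit of one
  of the finitely many hit letters, giving (4).\<close>

lemma inv_eq_of_comp_id:
  assumes "monoid.mult G = (\<lambda>g h. h \<circ> g)" "\<one>\<^bsub>G\<^esub> = id"
    and "h \<in> carrier G" "h \<circ> g = id" "g \<circ> h = id"
  shows "inv\<^bsub>G\<^esub> g = h"
  unfolding m_inv_def
proof (rule the_equality)
  fix y assume y: "y \<in> carrier G \<and> g \<otimes>\<^bsub>G\<^esub> y = \<one>\<^bsub>G\<^esub> \<and> y \<otimes>\<^bsub>G\<^esub> g = \<one>\<^bsub>G\<^esub>"
  have "y = y \<circ> (g \<circ> h)" using assms(5) by simp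
  also have "\<dots> = h" using y assms(1,2,4) by (simp add: o_assoc)
  finally show "y = h" .
qed (use assms in simp)

lemma inv_Sym_grp: "bij a \<Longrightarrow> inv\<^bsub>Sym_grp\<^esub> a = inv_into UNIV a"
  by (rule inv_eq_of_comp_id)
     (auto simp: Sym_grp_def bij_imp_bij_inv surj_iff[THEN iffD1] inj_iff[THEN iffD1] bij_is_inj bij_is_surj)

lemma rooted_id: "rooted id = id"
proof
  fix u :: "'a list" show "rooted id u = id u" by (cases u) auto
qed

lemma rooted_comp: "rooted p \<circ> rooted q = rooted (p \<circ> q)"
proof
  fix u :: "'a list" show "(rooted p \<circ> rooted q) u = rooted (p \<circ> q) u" by (cases u) auto
qed

lemma rooted_inv_comp:
  assumes "bij a" shows "rooted (inv_into UNIV a) \<circ> rooted a = id" "rooted a \<circ> rooted (inv_into UNIV a) = id"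
  using assms
  by (simp_all add: rooted_comp rooted_id surj_iff[THEN iffD1] inj_iff[THEN iffD1] bij_is_inj bij_is_surj)

lemma rooted_in_tree_aut:
  assumes "bij a" shows "rooted a \<in> tree_aut"
proof -
  have "bij (rooted a)" using o_bij rooted_inv_comp[OF assms] by blast
  moreover have "length (rooted a u) = length u" for u by (cases u) auto
  moreover have "take (length u) (rooted a (u @ v)) = rooted a u" for u v by (cases u) auto
  ultimately show ?thesis unfolding tree_aut_def by blast
qed

lemma inv_Aut_grp_rooted: "bij a \<Longrightarrow> inv\<^bsub>Aut_grp\<^esub> (rooted a) = rooted (inv_into UNIV a)"
  by (rule inv_eq_of_comp_id)
     (auto simp: Aut_grp_def rooted_inv_comp rooted_in_tree_aut bij_imp_bij_inv)

lemma tconj_rooted: "bij a \<Longrightarrow> tconj (rooted a) b = rooted (inv_into UNIV a) \<circ> b \<circ> rooted a"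
  by (simp add: tconj_def inv_Aut_grp_rooted) (simp add: Aut_grp_def o_assoc)

lemma syl_prod_Cons [simp]: "syl_prod ((a', b) # ps) a = syl_prod ps a \<circ> tconj (rooted a') b"
  by (simp add: Aut_grp_def)

declare syl_prod.simps(2) [simp del]

lemma syl_prod_single_id: "syl_prod [(id, b)] id = b"
  by (simp only: syl_prod_Cons syl_prod.simps(1) tconj_rooted[OF bij_id] inv_id)
     (simp add: rooted_id)

lemma syl_prod_append: "syl_prod (ps @ qs) a = syl_prod qs a \<circ> syl_prod ps id"
  by (induction ps) (auto simp only: syl_prod_Cons syl_prod.simps(1) append.simps rooted_id o_assoc comp_id)

lemma syl_prod_eq_rooted_comp: "syl_prod ps a = rooted a \<circ> syl_prod ps id"
  using syl_prod_append[of ps "[]" a] by simp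

lemma tconj_rooted_comp:
  assumes a': "bij a'" and c: "bij c"
  shows "tconj (rooted a') b \<circ> rooted c = rooted c \<circ> tconj (rooted (a' \<circ> c)) b"
proof -
  have "rooted c \<circ> rooted (inv_into UNIV (a' \<circ> c)) = rooted (inv_into UNIV a')"
    using assms by (simp add: rooted_comp o_inv_distrib o_assoc surj_iff[THEN iffD1] bij_is_surj)
  then have "rooted c \<circ> tconj (rooted (a' \<circ> c)) b = rooted (inv_into UNIV a') \<circ> b \<circ> rooted (a' \<circ> c)"
    using assms by (simp only: tconj_rooted bij_comp o_assoc)
  then show ?thesis
    using a' by (simp only: tconj_rooted rooted_comp[symmetric] o_assoc)
qed

lemma syl_prod_comp_rooted:
  assumes "\<forall>(a', b) \<in> set ps. bij a'" and c: "bij c"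
  shows "syl_prod ps a \<circ> rooted c = syl_prod (map (\<lambda>(a', b). (a' \<circ> c, b)) ps) (a \<circ> c)"
  using assms(1)
proof (induction ps)
  case Nil then show ?case by (simp only: syl_prod.simps(1) list.map rooted_comp)
next
  case (Cons p ps)
  then obtain a' b where p: "p = (a', b)" and a': "bij a'" by auto
  have IH: "syl_prod ps a \<circ> rooted c = syl_prod (map (\<lambda>(a', b). (a' \<circ> c, b)) ps) (a \<circ> c)"
    by (rule Cons.IH) (use Cons.prems in simp)
  have "syl_prod (p # ps) a \<circ> rooted c = syl_prod ps a \<circ> (tconj (rooted a') b \<circ> rooted c)"
    by (simp only: p syl_prod_Cons comp_assoc)
  also have "\<dots> = (syl_prod ps a \<circ> rooted c) \<circ> tconj (rooted (a' \<circ> c)) b"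
    by (simp only: tconj_rooted_comp[OF a' c] comp_assoc)
  also have "\<dots> = syl_prod (map (\<lambda>(a', b). (a' \<circ> c, b)) (p # ps)) (a \<circ> c)"
    by (simp only: p list.map prod.case syl_prod_Cons IH)
  finally show ?case .
qed

lemma tree_aut_append_sec:
  assumes "g \<in> tree_aut" shows "g (u @ v) = g u @ sec g u v"
proof -
  have "take (length u) (g (u @ v)) = g u"
    using assms unfolding tree_aut_def by blast
  then show ?thesis
    unfolding sec_def by (metis append_take_drop_id)
qed

lemma sec_Nil: "g \<in> tree_aut \<Longrightarrow> sec g u [] = []"
  unfolding tree_aut_def sec_def by simp

lemma inj_on_funpow_card_range:
  fixes f :: "'b \<Rightarrow> 'b"
  assumes "finite (range (\<lambda>j. (f ^^ j) y))"
  shows "inj_on (\<lambda>j. (f ^^ j) y) {..<card (range (\<lambda>j. (f ^^ j) y))}"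
proof (rule inj_onI, rule ccontr)
  let ?s = "\<lambda>j. (f ^^ j) y"
  fix i' j' assume "i' \<in> {..<card (range ?s)}" "j' \<in> {..<card (range ?s)}" "?s i' = ?s j'" "i' \<noteq> j'"
  then obtain i j where ij: "i < j" "j < card (range ?s)" "?s i = ?s j"
    by (cases "i' < j'") (auto dest: sym simp: nat_neq_iff)
  have "?s k \<in> ?s ` {..<j}" for k
  proof (induction k rule: less_induct)
    case (less k)
    show ?case
    proof (cases "k < j")
      case False
      then have "?s k = (f ^^ (k - j)) (?s j)"
        by (simp flip: funpow_add[THEN fun_cong, unfolded o_apply])
      also have "\<dots> = ?s (k - j + i)"
        by (simp add: ij(3)[symmetric] funpow_add)
      finally have "?s k = ?s (k - j + i)" .
      then show ?thesis
        using less[of "k - j + i"] ij(1) False by simp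
    qed simp
  qed
  then have "card (range ?s) \<le> card (?s ` {..<j})"
    by (intro card_mono) auto
  also have "\<dots> \<le> j"
    using card_image_le[of "{..<j}" ?s] by simp
  finally show False
    using ij(2) by simp
qed

definition syl_at_most ::
    "('a \<Rightarrow> 'a) set \<Rightarrow> ('a list \<Rightarrow> 'a list) set \<Rightarrow> nat \<Rightarrow> ('a list \<Rightarrow> 'a list) set" where
  "syl_at_most A B n = {syl_prod ps a | ps a. length ps \<le> n \<and> set ps \<subseteq> A \<times> B \<and> a \<in> A}"

lemma syl_at_most_mono: "m \<le> n \<Longrightarrow> syl_at_most A B m \<subseteq> syl_at_most A B n"
  unfolding syl_at_most_def by fastforce

lemma syl_at_most_0: "syl_at_most A B 0 = rooted ` A"
  unfolding syl_at_most_def by auto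

lemma syl_le_if_syl_at_most: "h \<in> syl_at_most A B n \<Longrightarrow> syl A B h \<le> n"
  unfolding syl_at_most_def syl_def by (fastforce intro: Least_le[THEN order_trans])

lemma obtain_minimal_syl_prod:
  assumes "h \<in> syl_at_most A B n"
  obtains ps a where "length ps = syl A B h" "set ps \<subseteq> A \<times> B" "a \<in> A" "h = syl_prod ps a"
proof -
  have "\<exists>m ps a. length ps = m \<and> set ps \<subseteq> A \<times> B \<and> a \<in> A \<and> h = syl_prod ps a"
    using assms unfolding syl_at_most_def by blast
  from LeastI_ex[OF this] show ?thesis
    using that unfolding syl_def by blast
qed

fun comp_list :: "('b \<Rightarrow> 'b) list \<Rightarrow> 'b \<Rightarrow> 'b" where
  "comp_list [] = id"
| "comp_list (f # fs) = comp_list fs \<circ> f"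

lemma comp_list_append: "comp_list (fs @ gs) = comp_list gs \<circ> comp_list fs"
  by (induction fs) (simp_all add: o_assoc)

lemma comp_list_Nil: "\<forall>f \<in> set fs. f [] = [] \<Longrightarrow> comp_list fs [] = []"
  by (induction fs) simp_all

fun true_runs :: "bool list \<Rightarrow> nat" where
  "true_runs [] = 0"
| "true_runs (False # bs) = true_runs bs"
| "true_runs [True] = 1"
| "true_runs (True # True # bs) = true_runs (True # bs)"
| "true_runs (True # False # bs) = Suc (true_runs bs)"

lemma true_runs_le_count_list: "true_runs bs \<le> count_list bs True"
  by (induction bs rule: true_runs.induct) simp_all

lemma double_true_runs_le: "2 * true_runs bs \<le> length bs + 1"
  by (induction bs rule: true_runs.induct) simp_all

definition AB_word ::
    "('a \<Rightarrow> 'a) set \<Rightarrow> ('a list \<Rightarrow> 'a list) set \<Rightarrow> (('a list \<Rightarrow> 'a list) \<times> bool) list \<Rightarrow> bool" where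
  "AB_word A B ws \<longleftrightarrow> (\<forall>(f, in_B) \<in> set ws. if in_B then f \<in> B else f \<in> rooted ` A)"

text \<open>The letters of g|_x coming from the syllables of ps; the flag marks those equal to b
  itself (the image of x is z), which are the letters from B.\<close>

definition sec_word ::
    "'a \<Rightarrow> (('a \<Rightarrow> 'a) \<times> ('a list \<Rightarrow> 'a list)) list \<Rightarrow> 'a \<Rightarrow> (('a list \<Rightarrow> 'a list) \<times> bool) list" where
  "sec_word z ps x = map (\<lambda>(a', b). (sec b [a' x], a' x = z)) ps"

definition hits :: "'a \<Rightarrow> (('a \<Rightarrow> 'a) \<times> 'b) list \<Rightarrow> 'a \<Rightarrow> nat" where
  "hits z ps x = length (filter (\<lambda>(a', b). a' x = z) ps)"

lemma count_list_sec_word: "count_list (map snd (sec_word z ps x)) True = hits z ps x"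
  unfolding sec_word_def hits_def by (induction ps) auto

lemma hits_Cons: "hits z ((a', b) # ps) x = (if a' x = z then 1 else 0) + hits z ps x"
  unfolding hits_def by simp

lemma hits_support: "{x. hits z ps x \<noteq> 0} = (\<Union>(a', b) \<in> set ps. a' -` {z})"
  unfolding hits_def by (auto simp: filter_empty_conv)

lemma sum_hits_le:
  assumes "finite S" "\<forall>(a', b) \<in> set ps. inj a'"
  shows "(\<Sum>x\<in>S. hits z ps x) \<le> length ps"
  using assms(2)
proof (induction ps)
  case Nil
  then show ?case by (simp add: hits_def)
next
  case (Cons p ps)
  obtain a' b where p: "p = (a', b)" and "inj a'"
    using Cons.prems by auto
  have "card {x \<in> S. a' x = z} \<le> Suc 0"
    using assms(1) \<open>inj a'\<close> by (auto simp: card_le_Suc0_iff_eq dest: injD)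
  then have "(\<Sum>x\<in>S. if a' x = z then 1 else 0) \<le> (1 :: nat)"
    using assms(1) by (simp add: sum.inter_filter[symmetric])
  moreover have "(\<Sum>x\<in>S. hits z ps x) \<le> length ps"
    using Cons by simp
  ultimately show ?case
    by (simp add: p hits_Cons sum.distrib)
qed

definition iter_sec_word ::
    "'a \<Rightarrow> (('a \<Rightarrow> 'a) \<times> ('a list \<Rightarrow> 'a list)) list \<Rightarrow> ('a \<Rightarrow> 'a) \<Rightarrow> 'a \<Rightarrow> nat
      \<Rightarrow> (('a list \<Rightarrow> 'a list) \<times> bool) list" where
  "iter_sec_word z ps a x k = concat (map (\<lambda>j. sec_word z ps ((a ^^ j) x)) [0..<k])"

lemma count_list_iter_sec_word:
  "count_list (map snd (iter_sec_word z ps a x k)) True = (\<Sum>j<k. hits z ps ((a ^^ j) x))"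
  by (induction k) (simp_all add: iter_sec_word_def count_list_sec_word)

context
  fixes z :: 'a and A :: "('a \<Rightarrow> 'a) set" and B :: "('a list \<Rightarrow> 'a list) set"
  assumes cs: "CS_group z A B"
begin

lemma A_subgroup: "subgroup A Sym_grp"
  using cs unfolding CS_group_def by blast

lemma bij_if_in_A: "a \<in> A \<Longrightarrow> bij a"
  using subgroup.subset[OF A_subgroup] unfolding Sym_grp_def by auto

lemma id_in_A: "id \<in> A"
  using subgroup.one_closed[OF A_subgroup] unfolding Sym_grp_def by simp

lemma comp_in_A: "a \<in> A \<Longrightarrow> c \<in> A \<Longrightarrow> c \<circ> a \<in> A"
  using cs subgroup.m_closed[of A Sym_grp a c] unfolding CS_group_def Sym_grp_def by simp

lemma inv_into_in_A: "a \<in> A \<Longrightarrow> inv_into UNIV a \<in> A"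
  using cs subgroup.m_inv_closed[of A Sym_grp a] inv_Sym_grp[OF bij_if_in_A]
  unfolding CS_group_def by simp

lemma comp_in_B: "b \<in> B \<Longrightarrow> b' \<in> B \<Longrightarrow> b' \<circ> b \<in> B"
  using cs subgroup.m_closed[of B Aut_grp b b'] unfolding CS_group_def Aut_grp_def by simp

lemma inv_Aut_grp_in_B: "b \<in> B \<Longrightarrow> inv\<^bsub>Aut_grp\<^esub> b \<in> B"
  using cs subgroup.m_inv_closed[of B Aut_grp b] unfolding CS_group_def by simp

lemma rooted_in_syl_at_most: "a \<in> A \<Longrightarrow> rooted a \<in> syl_at_most A B n"
  using syl_at_most_0 syl_at_most_mono[of 0 n] by blast

lemma B_in_syl_at_most: "b \<in> B \<Longrightarrow> b \<in> syl_at_most A B (Suc n)"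
  unfolding syl_at_most_def using syl_prod_single_id[of b, symmetric] id_in_A by fastforce

lemma comp_in_syl_at_most:
  assumes "g \<in> syl_at_most A B m" "h \<in> syl_at_most A B n"
  shows "h \<circ> g \<in> syl_at_most A B (m + n)"
proof -
  obtain ps a where g: "g = syl_prod ps a" "length ps \<le> m" "set ps \<subseteq> A \<times> B" "a \<in> A"
    using assms(1) unfolding syl_at_most_def by blast
  obtain qs c where h: "h = syl_prod qs c" "length qs \<le> n" "set qs \<subseteq> A \<times> B" "c \<in> A"
    using assms(2) unfolding syl_at_most_def by blast
  define qs' where "qs' = map (\<lambda>(a', b). (a' \<circ> a, b)) qs"
  have qs_bij: "\<forall>(a', b) \<in> set qs. bij a'"
    using h(3) bij_if_in_A by auto
  have "h \<circ> g = (syl_prod qs c \<circ> rooted a) \<circ> syl_prod ps id"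
    using g(1) h(1) syl_prod_eq_rooted_comp[of ps a] by (simp add: comp_assoc)
  also have "\<dots> = syl_prod qs' (c \<circ> a) \<circ> syl_prod ps id"
    by (simp only: qs'_def syl_prod_comp_rooted[OF qs_bij bij_if_in_A[OF g(4)]])
  also have "\<dots> = syl_prod (ps @ qs') (c \<circ> a)"
    by (simp only: syl_prod_append)
  finally have "h \<circ> g = syl_prod (ps @ qs') (c \<circ> a)" .
  moreover have "set (ps @ qs') \<subseteq> A \<times> B"
    using g(3,4) h(3) comp_in_A unfolding qs'_def by auto
  moreover have "length (ps @ qs') \<le> m + n"
    using g(2) h(2) unfolding qs'_def by simp
  ultimately show ?thesis
    using comp_in_A[OF g(4) h(4)] unfolding syl_at_most_def by blast
qed

lemma CS_gen_syl_at_most: "g \<in> CS_gen A B \<Longrightarrow> \<exists>n. g \<in> syl_at_most A B n"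
  unfolding CS_gen_def
proof (induction rule: generate.induct)
  case one
  have "\<one>\<^bsub>Aut_grp\<^esub> = rooted id"
    by (simp add: Aut_grp_def rooted_id)
  then show ?case
    using rooted_in_syl_at_most[OF id_in_A] by metis
next
  case (incl h)
  then show ?case
    using rooted_in_syl_at_most B_in_syl_at_most by blast
next
  case (inv h)
  then consider a where "a \<in> A" "h = rooted a" | "h \<in> B"
    by blast
  then show ?case
  proof cases
    case 1
    then show ?thesis
      using rooted_in_syl_at_most[OF inv_into_in_A] by (auto simp: inv_Aut_grp_rooted bij_if_in_A)
  next
    case 2
    then show ?thesis
      using B_in_syl_at_most[OF inv_Aut_grp_in_B] by blast
  qed
next
  case (eng g h)
  obtain m n where "g \<in> syl_at_most A B m" "h \<in> syl_at_most A B n"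
    using eng.IH by blast
  then have "h \<circ> g \<in> syl_at_most A B (m + n)"
    by (rule comp_in_syl_at_most)
  then show ?case
    by (auto simp only: Aut_grp_def monoid.simps)
qed

lemma AB_word_syl_at_most:
  assumes "AB_word A B ws"
  shows "comp_list (map fst ws) \<in> syl_at_most A B (true_runs (map snd ws))"
proof -
  \<comment> \<open>A pending B-factor on the right merges with a leading run of B-letters.\<close>
  have "comp_list (map fst ws) \<in> syl_at_most A B (true_runs (map snd ws)) \<and>
    (\<forall>b \<in> B. comp_list (map fst ws) \<circ> b \<in> syl_at_most A B (true_runs (True # map snd ws)))"
    using assms
  proof (induction ws)
    case Nil
    show ?case
    proof (intro conjI ballI)
      show "comp_list (map fst []) \<in> syl_at_most A B (true_runs (map snd []))"
        using rooted_in_syl_at_most[OF id_in_A]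
        by (simp only: list.map comp_list.simps(1) rooted_id true_runs.simps(1))
      show "comp_list (map fst []) \<circ> b \<in> syl_at_most A B (true_runs (True # map snd []))"
        if "b \<in> B" for b
        using B_in_syl_at_most[OF that, of 0]
        by (simp only: list.map comp_list.simps(1) id_comp true_runs.simps(3) One_nat_def)
    qed
  next
    case (Cons p ws)
    obtain f in_B where p: "p = (f, in_B)" by fastforce
    have "AB_word A B ws"
      using Cons.prems by (simp add: AB_word_def)
    note IH = Cons.IH[OF this, THEN conjunct1] Cons.IH[OF this, THEN conjunct2, rule_format]
    have comp_Cons: "comp_list (map fst (p # ws)) = comp_list (map fst ws) \<circ> f"
      by (simp only: p list.map fst_conv comp_list.simps(2))
    show ?case
    proof (cases in_B)
      case True
      then have f: "f \<in> B"
        using Cons.prems p by (simp add: AB_word_def)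
      have runs: "true_runs (map snd (p # ws)) = true_runs (True # map snd ws)"
        "true_runs (True # map snd (p # ws)) = true_runs (True # map snd ws)"
        by (simp_all add: p True)
      show ?thesis
        unfolding comp_Cons comp_assoc runs using IH(2)[OF f] IH(2)[OF comp_in_B[OF _ f]] by blast
    next
      case False
      then obtain c where c: "c \<in> A" "f = rooted c"
        using Cons.prems p by (auto simp: AB_word_def)
      have runs: "true_runs (map snd (p # ws)) = 0 + true_runs (map snd ws)"
        "true_runs (True # map snd (p # ws)) = (Suc 0 + 0) + true_runs (map snd ws)"
        by (simp_all add: p False)
      show ?thesis
        unfolding comp_Cons comp_assoc runs c(2)
        using comp_in_syl_at_most[OF rooted_in_syl_at_most[OF c(1)] IH(1)]
          comp_in_syl_at_most[OF comp_in_syl_at_most[OF B_in_syl_at_most[of _ 0]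
              rooted_in_syl_at_most[OF c(1), of 0]] IH(1)]
        by blast
    qed
  qed
  then show ?thesis ..
qed

lemma B_apply_Cons: "b \<in> B \<Longrightarrow> b (x # v) = x # sec b [x] v"
  using cs tree_aut_append_sec[of b "[x]" v] unfolding CS_group_def St1_def by auto

lemma tconj_rooted_apply_Cons:
  "a' \<in> A \<Longrightarrow> b \<in> B \<Longrightarrow> tconj (rooted a') b (x # v) = x # sec b [a' x] v"
  by (simp add: tconj_rooted bij_if_in_A B_apply_Cons bij_is_inj)

lemma syl_prod_apply_Cons:
  "set ps \<subseteq> A \<times> B \<Longrightarrow> syl_prod ps a (x # v) = a x # comp_list (map fst (sec_word z ps x)) v"
  by (induction ps arbitrary: v) (auto simp: sec_word_def tconj_rooted_apply_Cons)

lemma funpow_syl_prod_apply_Cons: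
  assumes "set ps \<subseteq> A \<times> B"
  shows "(syl_prod ps a ^^ k) (x # v) =
    (a ^^ k) x # comp_list (map fst (iter_sec_word z ps a x k)) v"
  by (induction k arbitrary: v)
     (simp_all add: iter_sec_word_def syl_prod_apply_Cons[OF assms] comp_list_append)

lemma AB_word_sec_word: "set ps \<subseteq> A \<times> B \<Longrightarrow> AB_word A B (sec_word z ps x)"
  using cs unfolding CS_group_def AB_word_def sec_word_def by auto

lemma sec_word_Nil: "set ps \<subseteq> A \<times> B \<Longrightarrow> f \<in> fst ` set (sec_word z ps x) \<Longrightarrow> f [] = []"
  using cs sec_Nil unfolding CS_group_def St1_def sec_word_def by fastforce

lemma funpow_syl_prod_singleton:
  assumes "set ps \<subseteq> A \<times> B"
  shows "(syl_prod ps a ^^ k) [x] = [(a ^^ k) x]"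
proof -
  have "comp_list (map fst (iter_sec_word z ps a x k)) [] = []"
    using sec_word_Nil[OF assms] by (intro comp_list_Nil) (fastforce simp: iter_sec_word_def)
  then show ?thesis
    using funpow_syl_prod_apply_Cons[OF assms, where v = "[]"] by simp
qed

lemma top_perm_syl_prod: "set ps \<subseteq> A \<times> B \<Longrightarrow> top_perm (syl_prod ps a) = a"
  by (rule ext) (simp add: top_perm_def syl_prod_apply_Cons)

lemma syl_comp_list_le_true_runs:
  "AB_word A B ws \<Longrightarrow> syl A B (comp_list (map fst ws)) \<le> true_runs (map snd ws)"
  by (rule syl_le_if_syl_at_most[OF AB_word_syl_at_most])

lemma sec_syl_prod:
  "set ps \<subseteq> A \<times> B \<Longrightarrow> sec (syl_prod ps a) [x] = comp_list (map fst (sec_word z ps x))"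
  by (rule ext) (simp add: sec_def syl_prod_apply_Cons)

lemma double_syl_sec_syl_prod_le:
  assumes "set ps \<subseteq> A \<times> B"
  shows "2 * syl A B (sec (syl_prod ps a) [x]) \<le> length ps + 1"
proof -
  have "syl A B (sec (syl_prod ps a) [x]) \<le> true_runs (map snd (sec_word z ps x))"
    unfolding sec_syl_prod[OF assms] by (rule syl_comp_list_le_true_runs[OF AB_word_sec_word[OF assms]])
  then show ?thesis
    using double_true_runs_le[of "map snd (sec_word z ps x)"] by (simp add: sec_word_def)
qed

lemma syl_sec_syl_prod_le_hits:
  assumes "set ps \<subseteq> A \<times> B"
  shows "syl A B (sec (syl_prod ps a) [x]) \<le> hits z ps x"
  unfolding sec_syl_prod[OF assms] count_list_sec_word[symmetric]
  using syl_comp_list_le_true_runs[OF AB_word_sec_word[OF assms]] true_runs_le_count_list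
  by (rule order_trans)

lemma inj_conjugators: "set ps \<subseteq> A \<times> B \<Longrightarrow> \<forall>(a', b) \<in> set ps. inj a'"
  using bij_if_in_A bij_is_inj by auto

lemma sum_syl_sec_syl_prod_le:
  assumes "set ps \<subseteq> A \<times> B" "finite S"
  shows "(\<Sum>x\<in>S. syl A B (sec (syl_prod ps a) [x])) \<le> length ps"
  using sum_mono[of S, OF syl_sec_syl_prod_le_hits[OF assms(1)]]
    sum_hits_le[OF assms(2) inj_conjugators[OF assms(1)]]
  by (rule order_trans)

lemma finite_hits_support: "set ps \<subseteq> A \<times> B \<Longrightarrow> finite {x. hits z ps x \<noteq> 0}"
  unfolding hits_support using inj_conjugators by (fastforce intro: finite_vimageI)

lemma finite_syl_sec_syl_prod_support:
  assumes "set ps \<subseteq> A \<times> B"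
  shows "finite {x. syl A B (sec (syl_prod ps a) [x]) \<noteq> 0}"
proof (rule finite_subset[OF _ finite_hits_support[OF assms]])
  show "{x. syl A B (sec (syl_prod ps a) [x]) \<noteq> 0} \<subseteq> {x. hits z ps x \<noteq> 0}"
  proof
    fix x assume "x \<in> {x. syl A B (sec (syl_prod ps a) [x]) \<noteq> 0}"
    then show "x \<in> {x. hits z ps x \<noteq> 0}"
      using syl_sec_syl_prod_le_hits[OF assms, of a x] by simp
  qed
qed

lemma stab_sec_syl_prod_in_syl_at_most:
  assumes "set ps \<subseteq> A \<times> B"
  shows "stab_sec (syl_prod ps a) [x]
    \<in> syl_at_most A B (\<Sum>j\<in>{..<orb_len (syl_prod ps a) [x]}. hits z ps ((a ^^ j) x))"
proof -
  let ?w = "iter_sec_word z ps a x (orb_len (syl_prod ps a) [x])"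
  have "stab_sec (syl_prod ps a) [x] = comp_list (map fst ?w)"
    by (rule ext) (simp add: stab_sec_def sec_def funpow_syl_prod_apply_Cons[OF assms])
  moreover have "AB_word A B ?w"
    using AB_word_sec_word[OF assms] by (auto simp: iter_sec_word_def AB_word_def)
  ultimately show ?thesis
    using AB_word_syl_at_most syl_at_most_mono[OF true_runs_le_count_list[of "map snd ?w"]]
    unfolding count_list_iter_sec_word by auto
qed

lemma syl_stab_sec_syl_prod_le:
  assumes "set ps \<subseteq> A \<times> B" and "finite (orb (syl_prod ps a) [x])"
  shows "syl A B (stab_sec (syl_prod ps a) [x]) \<le> length ps"
proof -
  let ?g = "syl_prod ps a" and ?l = "orb_len (syl_prod ps a) [x]"
  have "orb ?g [x] = range (\<lambda>j. (?g ^^ j) [x])"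
    unfolding orb_def by auto
  then have "inj_on (\<lambda>j. (?g ^^ j) [x]) {..<?l}"
    using inj_on_funpow_card_range[of ?g "[x]"] assms(2) by (simp add: orb_len_def)
  then have inj: "inj_on (\<lambda>j. (a ^^ j) x) {..<?l}"
    by (simp add: inj_on_def funpow_syl_prod_singleton[OF assms(1)])
  have "syl A B (stab_sec ?g [x]) \<le> (\<Sum>j\<in>{..<?l}. hits z ps ((a ^^ j) x))"
    by (rule syl_le_if_syl_at_most[OF stab_sec_syl_prod_in_syl_at_most[OF assms(1)]])
  also have "\<dots> = (\<Sum>y\<in>(\<lambda>j. (a ^^ j) x) ` {..<?l}. hits z ps y)"
    by (simp add: sum.reindex[OF inj])
  also have "\<dots> \<le> length ps"
    by (rule sum_hits_le[OF _ inj_conjugators[OF assms(1)]]) simp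
  finally show ?thesis .
qed

lemma finite_stab_sec_syl_prod_not_rooted:
  assumes "set ps \<subseteq> A \<times> B" and "a \<in> A" and "a ^^ m = id" and "0 < m"
  shows "finite {x. stab_sec (syl_prod ps a) [x] \<notin> rooted ` A}"
proof (rule finite_subset)
  let ?Z = "{y. hits z ps y \<noteq> 0}"
  show "{x. stab_sec (syl_prod ps a) [x] \<notin> rooted ` A} \<subseteq> (\<Union>k<m. (a ^^ k) -` ?Z)"
  proof
    fix x assume "x \<in> {x. stab_sec (syl_prod ps a) [x] \<notin> rooted ` A}"
    then have "stab_sec (syl_prod ps a) [x] \<notin> syl_at_most A B 0"
      by (simp add: syl_at_most_0)
    then obtain j where "hits z ps ((a ^^ j) x) \<noteq> 0"
      using stab_sec_syl_prod_in_syl_at_most[OF assms(1), of a x] by (metis sum.neutral)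
    moreover have "(a ^^ (j mod m)) x = (a ^^ j) x"
      using assms(3) by (simp add: funpow_mod_eq)
    ultimately show "x \<in> (\<Union>k<m. (a ^^ k) -` ?Z)"
      using assms(4) by (intro UN_I[of "j mod m"]) auto
  qed
  have "inj (a ^^ k)" for k
    using bij_is_inj[OF bij_if_in_A[OF assms(2)]] by simp
  then show "finite (\<Union>k<m. (a ^^ k) -` ?Z)"
    using finite_hits_support[OF assms(1)] by (blast intro: finite_vimageI)
qed

end

theorem mainTheorem2:
  fixes z :: 'a and A :: "('a \<Rightarrow> 'a) set" and B :: "('a list \<Rightarrow> 'a list) set"
    and g :: "'a list \<Rightarrow> 'a list"
  assumes "CS_group z A B" and "g \<in> CS_gen A B"
  shows "(\<forall>x. real (syl A B (sec g [x])) \<le> (real (syl A B g) + 1) / 2)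
       \<and> finite {x. syl A B (sec g [x]) \<noteq> 0}
       \<and> (\<Sum>x\<in>{x. syl A B (sec g [x]) \<noteq> 0}. syl A B (sec g [x])) \<le> syl A B g
       \<and> (\<forall>x. finite (orb g [x]) \<longrightarrow> syl A B (stab_sec g [x]) \<le> syl A B g)
       \<and> ((\<exists>n>0. top_perm g ^^ n = id) \<longrightarrow> finite {x. stab_sec g [x] \<notin> rooted ` A})"
proof -
  note cs = assms(1)
  obtain n where "g \<in> syl_at_most A B n"
    using CS_gen_syl_at_most[OF cs assms(2)] by blast
  then obtain ps a where ps: "length ps = syl A B g" "set ps \<subseteq> A \<times> B" "a \<in> A" "g = syl_prod ps a"
    by (rule obtain_minimal_syl_prod)
  have "\<forall>x. real (syl A B (sec g [x])) \<le> (real (syl A B g) + 1) / 2"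
  proof
    fix x
    have "real (2 * syl A B (sec g [x])) \<le> real (syl A B g + 1)"
      using double_syl_sec_syl_prod_le[OF cs ps(2)] ps(1,4) by (simp only: of_nat_le_iff)
    then show "real (syl A B (sec g [x])) \<le> (real (syl A B g) + 1) / 2"
      by simp
  qed
  moreover have finite_support: "finite {x. syl A B (sec g [x]) \<noteq> 0}"
    using finite_syl_sec_syl_prod_support[OF cs ps(2)] ps(4) by simp
  moreover have "(\<Sum>x\<in>{x. syl A B (sec g [x]) \<noteq> 0}. syl A B (sec g [x])) \<le> syl A B g"
    using sum_syl_sec_syl_prod_le[OF cs ps(2) finite_support] ps(1,4) by simp
  moreover have "\<forall>x. finite (orb g [x]) \<longrightarrow> syl A B (stab_sec g [x]) \<le> syl A B g"
    using syl_stab_sec_syl_prod_le[OF cs ps(2)] ps(1,4) by simp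
  moreover have "(\<exists>n>0. top_perm g ^^ n = id) \<longrightarrow> finite {x. stab_sec g [x] \<notin> rooted ` A}"
    using finite_stab_sec_syl_prod_not_rooted[OF cs ps(2,3)] top_perm_syl_prod[OF cs ps(2)] ps(4)
    by auto
  ultimately show ?thesis
    by (intro conjI)
qed

end
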